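(* For every distribution $\mathcal P$ on $\mathcal C^{d,k}$: if $\widehat{CSP}_{n,p}(\mathcal P)$ has a sharp threshold of satisfiability, then so does $CSP_{n,p}(\mathcal P)$. If $k\ge 3$, the converse also holds: if $CSP_{n,p}(\mathcal P)$ has a sharp threshold then so does $\widehat{CSP}_{n,p}(\mathcal P)$.
   Context: Fix integers $d\ge 2$ and $k\ge 2$. Variables of a CSP take values in $\{1,\dots,d\}$. A restriction is a $k$-tuple $(\delta_1,\dots,\delta_k)\in\{1,\dots,d\}^k$. A constraint on an ordered $k$-tuple $(x_1,\dots,x_k)$ of distinct variables is a set of restrictions; an assignment satisfies it if the tuple of values given to $(x_1,\dots,x_k)$ is not one of its restrictions. A CSP is satisfiable if some assignment satisfies all its constraints simultaneously. Let $\mathcal C^{d,k}$ be the set of all $2^{d^k}$ constraints on canonical variables $(X_1,\dots,X_k)$, let $\mathcal P$ be a probability distribution on $\mathcal C^{d,k}$, and ${\rm supp}(\mathcal P)=\{C:\mathcal P(C)>0\}$. The random CSP $CSP_{n,p}(\mathcal P)$ on $n$ variables: take a random $k$-uniform hypergraph in which each of the $\binom nk$ $k$-sets of variables is an edge independently with probability $p$; for each edge, map its $k$ variables onto $X_1,\dots,X_k$ by a uniformly random bijection and place on it an independent random constraint drawn from $\mathcal P$. The random CSP $\widehat{CSP}_{n,p}(\mathcal P)$: for each of the $n(n-1)\cdots(n-k+1)$ ordered $k$-tuples of distinct variables and each $C\in{\rm supp}(\mathcal P)$, independently place $C$ on that ordered tuple with probability $\mathcal P(C)\,p/k!$ (so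 a tuple may receive several constraints). A property holds almost surely (a.s.) if its probability tends to $1$ as $n\to\infty$. A random CSP model has a sharp threshold (of satisfiability) if there is a function $c(n)>0$ with $c(n)=\Theta(1)$ such that for every $\epsilon>0$, with $p=(1-\epsilon)c(n)/n^{k-1}$ it is a.s. satisfiable and with $p=(1+\epsilon)c(n)/n^{k-1}$ it is a.s. unsatisfiable. *)

theory Defs
  imports "HOL-Probability.Probability" "HOL-Library.Landau_Symbols"
begin

text \<open>Values are 1..d; variables are 0..n-1 (any n-element set would do).
  A constraint is a set of restrictions; the i-th entry of a restriction
  refers to the canonical variable X_(i+1).\<close>

definition restrictions :: "nat \<Rightarrow> nat \<Rightarrow> nat list set" where
  "restrictions d k = {r. length r = k \<and> set r \<subseteq> {1..d}}"

definition constraints :: "nat \<Rightarrow> nat \<Rightarrow> nat list set set" where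
  "constraints d k = Pow (restrictions d k)"

definition sat_constraint :: "(nat \<Rightarrow> nat) \<Rightarrow> nat list \<Rightarrow> nat list set \<Rightarrow> bool" where
  "sat_constraint \<sigma> xs C \<longleftrightarrow> map \<sigma> xs \<notin> C"

definition assignments :: "nat \<Rightarrow> nat \<Rightarrow> (nat \<Rightarrow> nat) set" where
  "assignments d n = {0..<n} \<rightarrow>\<^sub>E {1..d}"

definition ksets :: "nat \<Rightarrow> nat \<Rightarrow> nat set set" where
  "ksets n k = {S. S \<subseteq> {0..<n} \<and> card S = k}"

definition ktuples :: "nat \<Rightarrow> nat \<Rightarrow> nat list set" where
  "ktuples n k = {xs. distinct xs \<and> length xs = k \<and> set xs \<subseteq> {0..<n}}"

text \<open>Model CSP_{n,p}(P): for each k-set S, independently: with probability p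
  it becomes an edge, its variables are mapped to X_1..X_k by a uniformly
  random bijection (= uniformly random ordering xs of S) and a constraint C
  drawn from P is placed on it.\<close>
definition edge_pmf :: "real \<Rightarrow> nat list set pmf \<Rightarrow> nat set \<Rightarrow> (nat list \<times> nat list set) option pmf" where
  "edge_pmf p P S =
     do { b \<leftarrow> bernoulli_pmf p;
          if b then do { xs \<leftarrow> pmf_of_set {xs. distinct xs \<and> set xs = S};
                         C \<leftarrow> P;
                         return_pmf (Some (xs, C)) }
          else return_pmf None }"

definition CSP_model :: "nat \<Rightarrow> nat \<Rightarrow> real \<Rightarrow> nat list set pmf
      \<Rightarrow> (nat set \<Rightarrow> (nat list \<times> nat list set) option) pmf" where
  "CSP_model k n p P = Pi_pmf (ksets n k) None (edge_pmf p P)"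

definition CSP_satisfiable :: "nat \<Rightarrow> nat \<Rightarrow> nat \<Rightarrow> (nat set \<Rightarrow> (nat list \<times> nat list set) option) \<Rightarrow> bool" where
  "CSP_satisfiable d k n F \<longleftrightarrow>
     (\<exists>\<sigma>\<in>assignments d n. \<forall>S\<in>ksets n k.
        case F S of None \<Rightarrow> True | Some (xs, C) \<Rightarrow> sat_constraint \<sigma> xs C)"

definition CSP_sat_prob :: "nat \<Rightarrow> nat \<Rightarrow> nat list set pmf \<Rightarrow> nat \<Rightarrow> real \<Rightarrow> real" where
  "CSP_sat_prob d k P n p =
     measure_pmf.prob (CSP_model k n p P) {F. CSP_satisfiable d k n F}"

definition CSPhat_model :: "nat \<Rightarrow> nat \<Rightarrow> real \<Rightarrow> nat list set pmf
      \<Rightarrow> (nat list \<times> nat list set \<Rightarrow> bool) pmf" where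
  "CSPhat_model k n p P =
     Pi_pmf (ktuples n k \<times> set_pmf P) False
       (\<lambda>(xs, C). bernoulli_pmf (pmf P C * p / fact k))"

definition CSPhat_satisfiable :: "nat \<Rightarrow> nat \<Rightarrow> nat \<Rightarrow> nat list set pmf \<Rightarrow> (nat list \<times> nat list set \<Rightarrow> bool) \<Rightarrow> bool" where
  "CSPhat_satisfiable d k n P G \<longleftrightarrow>
     (\<exists>\<sigma>\<in>assignments d n. \<forall>xs\<in>ktuples n k. \<forall>C\<in>set_pmf P.
        G (xs, C) \<longrightarrow> sat_constraint \<sigma> xs C)"

definition CSPhat_sat_prob :: "nat \<Rightarrow> nat \<Rightarrow> nat list set pmf \<Rightarrow> nat \<Rightarrow> real \<Rightarrow> real" where
  "CSPhat_sat_prob d k P n p =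
     measure_pmf.prob (CSPhat_model k n p P) {G. CSPhat_satisfiable d k n P G}"

definition sharp_threshold :: "nat \<Rightarrow> (nat \<Rightarrow> real \<Rightarrow> real) \<Rightarrow> bool" where
  "sharp_threshold k sp \<longleftrightarrow>
     (\<exists>c :: nat \<Rightarrow> real. (\<forall>n. c n > 0) \<and> c \<in> \<Theta>(\<lambda>_. 1) \<and>
        (\<forall>\<epsilon>>0.
           ((\<lambda>n. sp n ((1 - \<epsilon>) * c n / real n ^ (k - 1))) \<longlonglongrightarrow> 1) \<and>
           ((\<lambda>n. sp n ((1 + \<epsilon>) * c n / real n ^ (k - 1))) \<longlonglongrightarrow> 0)))"

end

theory Submission
  imports Defs "HOL-Combinatorics.Multiset_Permutations"
begin

(*
  The two models are compared for each fixed n by coupling, and the comparison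
  inequalities are then turned into statements about thresholds.

  Group the constraints of CSPhat_{n,p} according to the k-set of variables they
  live on.  The k! orderings of a k-set S and the constraints C in supp(P) give
  independent "slots", slot (xs, C) being filled with probability P(C) p / k!; in
  total S receives a constraint with probability at most p, and exactly one
  constraint with probability at least p (1 - p).  An edge of CSP_{n,p'} carries
  the constraint (xs, C) with probability exactly P(C) p' / k!.  Hence
    (1) if p' <= p (1 - p), the edge of CSP_{n,p'} can be obtained by thinning the
        constraints of CSPhat_{n,p} on S, so Pr[CSPhat_{n,p} sat] <= Pr[CSP_{n,p'} sat];
    (2) if p <= (1 - p) p', then, conditioned on no k-set receiving two or more
        constraints (probability >= (1 - p^2)^(n choose k)), CSPhat_{n,p} is a thinning
        of CSP_{n,p'}, so (1 - p^2)^(n choose k) Pr[CSP_{n,p'} sat] <= Pr[CSPhat_{n,p} sat].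
  With p = Theta(n^(1-k)) the factor in (2) is bounded below by a positive constant,
  and tends to 1 when k >= 3; this is why the converse direction needs k >= 3.
*)

section \<open>Products of independent pmfs\<close>

definition regroup :: "'j set \<Rightarrow> ('j \<Rightarrow> 'i) \<Rightarrow> 'i set \<Rightarrow> 'b \<Rightarrow> ('j \<Rightarrow> 'b) \<Rightarrow> 'i \<Rightarrow> 'j \<Rightarrow> 'b" where
  "regroup J g I d G = (\<lambda>i j. if i \<in> I \<and> j \<in> J \<and> g j = i then G j else d)"

definition regrouped :: "'j set \<Rightarrow> ('j \<Rightarrow> 'i) \<Rightarrow> 'i set \<Rightarrow> 'b \<Rightarrow> ('i \<Rightarrow> 'j \<Rightarrow> 'b) \<Rightarrow> bool" where
  "regrouped J g I d H \<longleftrightarrow> (\<forall>i j. \<not> (i \<in> I \<and> j \<in> J \<and> g j = i) \<longrightarrow> H i j = d)"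

lemma pmf_map_regroup:
  assumes fJ: "finite J" and gJ: "g ` J \<subseteq> I"
  shows "pmf (map_pmf (regroup J g I d) (Pi_pmf J d p)) H =
           (if regrouped J g I d H then \<Prod>j\<in>J. pmf (p j) (H (g j) j) else 0)"
proof (cases "regrouped J g I d H")
  case False
  hence "regroup J g I d -` {H} = {}"
    by (auto simp: regrouped_def regroup_def)
  with False show ?thesis by (simp add: pmf_map)
next
  case True
  let ?M = "Pi_pmf J d p"
  define G0 where "G0 = (\<lambda>j. if j \<in> J then H (g j) j else d)"
  have "regroup J g I d -` {H} \<inter> set_pmf ?M = {G0} \<inter> set_pmf ?M"
  proof (intro equalityI subsetI)
    fix G assume G: "G \<in> regroup J g I d -` {H} \<inter> set_pmf ?M"
    hence H: "H = regroup J g I d G" by simp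
    have "G j = G0 j" for j
    proof (cases "j \<in> J")
      case True
      with gJ show ?thesis by (auto simp: H G0_def regroup_def)
    next
      case False
      with G set_Pi_pmf_subset[OF fJ, of d p] show ?thesis by (auto simp: G0_def)
    qed
    with G show "G \<in> {G0} \<inter> set_pmf ?M" by auto
  next
    fix G assume G: "G \<in> {G0} \<inter> set_pmf ?M"
    have "regroup J g I d G0 = H"
      using True by (auto simp: regroup_def regrouped_def G0_def fun_eq_iff)
    with G show "G \<in> regroup J g I d -` {H} \<inter> set_pmf ?M" by auto
  qed
  hence "pmf (map_pmf (regroup J g I d) ?M) H = measure ?M {G0}"
    by (metis measure_Int_set_pmf pmf_map)
  also have "\<dots> = (\<Prod>j\<in>J. pmf (p j) (H (g j) j))"
    using fJ by (simp add: measure_pmf_single pmf_Pi G0_def cong: prod.cong)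
  finally show ?thesis using True by simp
qed

lemma pmf_Pi_pmf_fibres:
  assumes fJ: "finite J" and fI: "finite I" and gJ: "g ` J \<subseteq> I"
  shows "pmf (Pi_pmf I (\<lambda>_. d) (\<lambda>i. Pi_pmf {j\<in>J. g j = i} d p)) H =
           (if regrouped J g I d H then \<Prod>j\<in>J. pmf (p j) (H (g j) j) else 0)"
proof (cases "regrouped J g I d H")
  case True
  have fibre: "finite {j\<in>J. g j = i}" for i using fJ by simp
  have "pmf (Pi_pmf I (\<lambda>_. d) (\<lambda>i. Pi_pmf {j\<in>J. g j = i} d p)) H
      = (\<Prod>i\<in>I. pmf (Pi_pmf {j\<in>J. g j = i} d p) (H i))"
    using True fI by (subst pmf_Pi') (auto simp: regrouped_def fun_eq_iff)
  also have "\<dots> = (\<Prod>i\<in>I. \<Prod>j\<in>{j\<in>J. g j = i}. pmf (p j) (H (g j) j))"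
    using True by (intro prod.cong refl) (auto simp: pmf_Pi fibre regrouped_def intro!: prod.cong)
  also have "\<dots> = (\<Prod>j\<in>J. pmf (p j) (H (g j) j))"
    by (rule prod.group[OF fJ fI gJ])
  finally show ?thesis using True by simp
next
  case False
  then obtain i j where ij: "\<not> (i \<in> I \<and> j \<in> J \<and> g j = i)" "H i j \<noteq> d"
    by (auto simp: regrouped_def)
  show ?thesis
  proof (cases "i \<in> I")
    case True
    have "pmf (Pi_pmf {j\<in>J. g j = i} d p) (H i) = 0"
      using ij True fJ by (intro pmf_Pi_outside) auto
    hence "(\<Prod>i\<in>I. pmf (Pi_pmf {j\<in>J. g j = i} d p) (H i)) = 0"
      using True fI by (intro prod_zero) auto
    with False fI show ?thesis by (subst pmf_Pi) auto
  next
    case False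
    with ij have "\<not> (\<forall>i. i \<notin> I \<longrightarrow> H i = (\<lambda>_. d))" by (auto simp: fun_eq_iff)
    with \<open>\<not> regrouped J g I d H\<close> fI show ?thesis by (subst pmf_Pi) auto
  qed
qed

lemma Pi_pmf_regroup:
  assumes "finite J" "finite I" "g ` J \<subseteq> I"
  shows "map_pmf (regroup J g I d) (Pi_pmf J d p)
           = Pi_pmf I (\<lambda>_. d) (\<lambda>i. Pi_pmf {j\<in>J. g j = i} d p)"
  by (rule pmf_eqI) (simp only: pmf_map_regroup[OF assms(1,3)] pmf_Pi_pmf_fibres[OF assms])

text \<open>Option values model "empty" (None) or "occupied by x" (Some x).\<close>
definition thin_kernel :: "real \<Rightarrow> ('a \<Rightarrow> real) \<Rightarrow> 'a option \<Rightarrow> 'a option option pmf" where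
  "thin_kernel g r ov = bind_pmf (bernoulli_pmf g) (\<lambda>b. if b then (case ov of
        None \<Rightarrow> return_pmf (Some None)
      | Some x \<Rightarrow> map_pmf (\<lambda>c. if c then Some (Some x) else Some None) (bernoulli_pmf (r x)))
      else return_pmf None)"

lemma set_thin_kernel:
  "y \<in> set_pmf (thin_kernel g r ov) \<Longrightarrow> y = None \<or> y = Some None \<or> (\<exists>x. ov = Some x \<and> y = Some (Some x))"
  by (auto simp: thin_kernel_def split: option.splits if_splits)

lemma pmf_thin_kernel_None:
  assumes "0 \<le> g" "g \<le> 1"
  shows "pmf (thin_kernel g r ov) None = 1 - g"
proof -
  have never_fails: "(\<lambda>c. if c then Some (Some x) else Some None) -` {None} = {}" for x :: 'a
    by (auto split: if_splits)
  show ?thesis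
    using assms by (auto simp: thin_kernel_def pmf_bind pmf_map never_fails split: option.splits)
qed

lemma measure_thin_kernel_success:
  assumes "0 \<le> g" "g \<le> 1"
  shows "measure (thin_kernel g r ov) {y. y \<noteq> None} = g"
proof -
  have compl: "{y. y \<noteq> None} = UNIV - {None}" by auto
  show ?thesis
    using measure_pmf.prob_compl[of "{None}" "thin_kernel g r ov"] assms
    by (simp only: compl) (simp add: measure_pmf_single pmf_thin_kernel_None)
qed

lemma pmf_thin_kernel_keep:
  assumes "0 \<le> g" "g \<le> 1" "0 \<le> r x" "r x \<le> 1"
  shows "pmf (thin_kernel g r ov) (Some (Some x)) = g * (if ov = Some x then r x else 0)"
proof -
  have keep: "(\<lambda>c. if c then Some (Some y) else Some None) -` {Some (Some x)} = (if y = x then {True} else {})"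
    for y by (auto split: if_splits)
  show ?thesis using assms
    by (cases ov) (auto simp: thin_kernel_def pmf_bind pmf_map keep measure_pmf_single)
qed

lemma pmf_eqI_except:
  fixes X Y :: "'a pmf"
  assumes "\<And>z. z \<noteq> a \<Longrightarrow> pmf X z = pmf Y z"
  shows "X = Y"
proof (rule pmf_eqI)
  fix z
  show "pmf X z = pmf Y z"
  proof (cases "z = a")
    case True
    have "measure X (UNIV - {a}) = measure Y (UNIV - {a})"
      unfolding measure_pmf_conv_infsetsum using assms by (intro infsetsum_cong) auto
    hence "1 - measure X {a} = 1 - measure Y {a}"
      by (simp add: measure_pmf.prob_compl[symmetric])
    thus ?thesis using True by (simp add: measure_pmf_single)
  qed (use assms in auto)
qed

lemma thin_kernel_decomposition:
  fixes A :: "'a option pmf" and M :: "'a option option pmf"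
  assumes g: "0 \<le> g" "g \<le> 1" and M_fail: "pmf M None = 1 - g"
    and M_le: "\<And>x. pmf M (Some (Some x)) \<le> g * pmf A (Some x)"
  defines "r \<equiv> (\<lambda>x. pmf M (Some (Some x)) / (g * pmf A (Some x)))"
  shows "M = bind_pmf A (thin_kernel g r)"
proof (rule pmf_eqI_except[where a = "Some None"])
  have r01: "0 \<le> r x \<and> r x \<le> 1" for x
    using M_le[of x] g unfolding r_def by (auto simp: divide_le_eq_1)
  fix z :: "'a option option" assume z: "z \<noteq> Some None"
  show "pmf M z = pmf (bind_pmf A (thin_kernel g r)) z"
  proof (cases z)
    case None
    thus ?thesis using g M_fail by (simp add: pmf_bind pmf_thin_kernel_None)
  next
    case (Some z')
    with z obtain x where x: "z = Some (Some x)" by (cases z') auto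
    have "pmf (bind_pmf A (thin_kernel g r)) z
        = measure_pmf.expectation A (\<lambda>ov. g * r x * indicator {Some x} ov)"
      unfolding x pmf_bind using r01 g
      by (intro Bochner_Integration.integral_cong) (auto simp: pmf_thin_kernel_keep indicator_def)
    also have "\<dots> = g * r x * pmf A (Some x)"
      by (simp add: measure_pmf_single)
    also have "\<dots> = pmf M z"
    proof (cases "g * pmf A (Some x) = 0")
      case True
      with M_le[of x] have "pmf M (Some (Some x)) = 0" by (simp add: antisym)
      with True show ?thesis by (auto simp: x)
    next
      case False thus ?thesis unfolding r_def x by simp
    qed
    finally show ?thesis by simp
  qed
qed

lemma Pi_thin_kernel_success:
  assumes fI: "finite I" and g01: "\<And>i. i \<in> I \<Longrightarrow> 0 \<le> g i \<and> g i \<le> 1"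
    and QF: "Q F" and Q_delete: "\<And>F F'. Q F \<Longrightarrow> (\<forall>i. F' i = F i \<or> F' i = None) \<Longrightarrow> Q F'"
  shows "(\<Prod>i\<in>I. g i) \<le> measure (Pi_pmf I (Some None) (\<lambda>i. thin_kernel (g i) (r i) (F i)))
                              {F'. (\<forall>i\<in>I. F' i \<noteq> None) \<and> Q (\<lambda>i. the (F' i))}"
proof -
  let ?K = "Pi_pmf I (Some None) (\<lambda>i. thin_kernel (g i) (r i) (F i))"
  let ?E = "{F'. (\<forall>i\<in>I. F' i \<noteq> None) \<and> Q (\<lambda>i. the (F' i))}"
  let ?succ = "Pi I (\<lambda>_. {y. y \<noteq> None})"
  have "(\<Prod>i\<in>I. g i) = measure ?K ?succ"
    using g01 by (subst measure_Pi_pmf_Pi[OF fI]) (simp only: measure_thin_kernel_success cong: prod.cong)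
  also have "\<dots> = measure ?K (?succ \<inter> set_pmf ?K)"
    by (simp add: measure_Int_set_pmf)
  also have "\<dots> \<le> measure ?K ?E"
  proof (rule measure_pmf.finite_measure_mono)
    show "?succ \<inter> set_pmf ?K \<subseteq> ?E"
    proof
      fix F' assume F': "F' \<in> ?succ \<inter> set_pmf ?K"
      hence succ: "F' \<in> ?succ" by (rule IntD1)
      have supp: "F' \<in> PiE_dflt I (Some None) (\<lambda>i. set_pmf (thin_kernel (g i) (r i) (F i)))"
        using F' set_Pi_pmf_subset'[OF fI, of "Some None" "\<lambda>i. thin_kernel (g i) (r i) (F i)"]
        by (auto simp: o_def)
      have "the (F' i) = F i \<or> the (F' i) = None" for i
      proof (cases "i \<in> I")
        case True
        with supp have "F' i \<in> set_pmf (thin_kernel (g i) (r i) (F i))" by (auto simp: PiE_dflt_def)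
        moreover have "F' i \<noteq> None" using Pi_mem[OF succ True] by simp
        ultimately show ?thesis by (auto dest!: set_thin_kernel)
      next
        case False
        with supp show ?thesis by (auto simp: PiE_dflt_def)
      qed
      hence "Q (\<lambda>i. the (F' i))" using Q_delete[OF QF, of "\<lambda>i. the (F' i)"] by simp
      with succ show "F' \<in> ?E" by (simp add: Pi_iff)
    qed
  qed simp
  finally show ?thesis .
qed

lemma Pi_pmf_thinning_bound:
  fixes A :: "'i \<Rightarrow> 'a option pmf" and M :: "'i \<Rightarrow> 'a option option pmf" and g :: "'i \<Rightarrow> real"
  assumes fI: "finite I"
    and g01: "\<And>i. i \<in> I \<Longrightarrow> 0 \<le> g i \<and> g i \<le> 1"
    and M_fail: "\<And>i. i \<in> I \<Longrightarrow> pmf (M i) None = 1 - g i"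
    and M_le: "\<And>i x. i \<in> I \<Longrightarrow> pmf (M i) (Some (Some x)) \<le> g i * pmf (A i) (Some x)"
    and Q_delete: "\<And>F F'. Q F \<Longrightarrow> (\<forall>i. F' i = F i \<or> F' i = None) \<Longrightarrow> Q F'"
  shows "(\<Prod>i\<in>I. g i) * measure (Pi_pmf I None A) {F. Q F}
      \<le> measure (Pi_pmf I (Some None) M) {F. (\<forall>i\<in>I. F i \<noteq> None) \<and> Q (\<lambda>i. the (F i))}"
proof -
  let ?G = "\<Prod>i\<in>I. g i"
  let ?E = "{F. (\<forall>i\<in>I. F i \<noteq> None) \<and> Q (\<lambda>i. the (F i))}"
  define r where "r = (\<lambda>i x. pmf (M i) (Some (Some x)) / (g i * pmf (A i) (Some x)))"
  define K where "K = (\<lambda>F. Pi_pmf I (Some None) (\<lambda>i. thin_kernel (g i) (r i) (F i)))"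
  have "Pi_pmf I (Some None) M = Pi_pmf I (Some None) (\<lambda>i. bind_pmf (A i) (thin_kernel (g i) (r i)))"
    using g01 M_fail M_le unfolding r_def by (intro Pi_pmf_cong refl thin_kernel_decomposition) auto
  also have "\<dots> = bind_pmf (Pi_pmf I None A) K"
    unfolding K_def by (rule Pi_pmf_bind[OF fI])
  finally have M_eq: "Pi_pmf I (Some None) M = bind_pmf (Pi_pmf I None A) K" .
  have G0: "0 \<le> ?G" using g01 by (intro prod_nonneg) auto
  have pointwise: "?G * indicator {F. Q F} F \<le> measure (K F) ?E" for F
    using Pi_thin_kernel_success[OF fI g01 _ Q_delete] by (cases "Q F") (auto simp: K_def)
  have "ennreal (?G * measure (Pi_pmf I None A) {F. Q F})
      = (\<integral>\<^sup>+F. ennreal (?G * indicator {F. Q F} F) \<partial>Pi_pmf I None A)"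
    using G0 by (simp add: measure_pmf.emeasure_eq_measure ennreal_mult' ennreal_indicator
                           nn_integral_cmult_indicator)
  also have "\<dots> \<le> (\<integral>\<^sup>+F. ennreal (measure (K F) ?E) \<partial>Pi_pmf I None A)"
    by (intro nn_integral_mono ennreal_leI pointwise)
  also have "\<dots> = ennreal (measure (Pi_pmf I (Some None) M) ?E)"
    by (simp add: M_eq emeasure_bind_pmf measure_pmf.emeasure_eq_measure[symmetric])
  finally show ?thesis by (subst (asm) ennreal_le_iff) auto
qed

lemma one_minus_sum_le_prod:
  fixes a :: "'a \<Rightarrow> real"
  assumes "finite A" "\<And>j. j \<in> A \<Longrightarrow> 0 \<le> a j \<and> a j \<le> 1"
  shows "1 - (\<Sum>j\<in>A. a j) \<le> (\<Prod>j\<in>A. 1 - a j)"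
  using assms
proof (induction A rule: finite_induct)
  case (insert x A)
  have IH: "1 - (\<Sum>j\<in>A. a j) \<le> (\<Prod>j\<in>A. 1 - a j)" and ax: "0 \<le> a x" "a x \<le> 1"
    using insert by auto
  have "0 \<le> (\<Sum>j\<in>A. a j)" using insert by (intro sum_nonneg) auto
  hence "1 - (\<Sum>j\<in>insert x A. a j) \<le> (1 - a x) * (1 - (\<Sum>j\<in>A. a j))"
    using insert ax by (simp add: algebra_simps)
  also have "\<dots> \<le> (1 - a x) * (\<Prod>j\<in>A. 1 - a j)" using IH ax by (intro mult_left_mono) auto
  finally show ?case using insert by simp
qed simp

lemma bernoulli_pmf_nonneg_param: "bernoulli_pmf (max 0 p) = bernoulli_pmf p"
proof -
  interpret pmf_as_function .
  show ?thesis by transfer (simp add: fun_eq_iff)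
qed

lemma pmf_map_Some_None: "pmf (map_pmf Some X) None = 0"
proof -
  have no_preimage: "Some -` {None} = {}" by auto
  show ?thesis unfolding pmf_map no_preimage by simp
qed

lemma pmf_bool_False: "pmf q False = 1 - pmf q True"
proof -
  have "set_pmf q \<subseteq> {False, True}" by auto
  from sum_pmf_eq_1[OF _ this] show ?thesis by simp
qed

text \<open>A lower bound for (1 - x)^m with small x, from ln (1 - x) \<ge> -x - x^2.\<close>
lemma exp_le_one_minus_pow:
  fixes x :: real
  assumes "0 \<le> x" "x \<le> 1/2"
  shows "exp (- 2 * real m * x) \<le> (1 - x) ^ m"
proof -
  have "- 2 * x \<le> - x - 2 * x\<^sup>2"
    using mult_right_mono[OF assms(2) assms(1)] by (simp add: power2_eq_square)
  also have "\<dots> \<le> ln (1 - x)" by (rule ln_one_minus_pos_lower_bound[OF assms])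
  finally have "exp (- 2 * x) \<le> exp (ln (1 - x))" by simp
  also have "\<dots> = 1 - x" using assms by simp
  finally have "exp (- 2 * x) \<le> 1 - x" .
  hence "exp (- 2 * x) ^ m \<le> (1 - x) ^ m" by (intro power_mono) auto
  thus ?thesis by (simp add: exp_of_nat_mult[symmetric] algebra_simps)
qed

section \<open>The two random CSP models\<close>

lemma finite_constraints: "finite (constraints d k)"
proof -
  have "restrictions d k = {xs. set xs \<subseteq> {1..d} \<and> length xs = k}"
    by (auto simp: restrictions_def)
  thus ?thesis using finite_lists_length_eq[of "{1..d}" k] by (simp add: constraints_def)
qed

lemma finite_ktuples: "finite (ktuples n k)"
  by (rule finite_subset[OF _ finite_lists_length_eq[of "{0..<n}" k]]) (auto simp: ktuples_def)

lemma finite_ksets: "finite (ksets n k)"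
  by (rule finite_subset[of _ "Pow {0..<n}"]) (auto simp: ksets_def)

lemma real_card_ksets_le: "real (card (ksets n k)) \<le> real n ^ k"
proof -
  have "card (ksets n k) = n choose k"
    using n_subsets[of "{0..<n}" k] by (simp add: ksets_def)
  also have "\<dots> \<le> n ^ k"
    by (cases "k \<le> n") (auto intro: binomial_le_pow simp: binomial_eq_0)
  finally show ?thesis by (metis of_nat_le_iff of_nat_power)
qed

definition hat_slots :: "nat \<Rightarrow> nat \<Rightarrow> nat list set pmf \<Rightarrow> (nat list \<times> nat list set) set" where
  "hat_slots n k P = ktuples n k \<times> set_pmf P"

definition slot_pmf :: "nat \<Rightarrow> real \<Rightarrow> nat list set pmf \<Rightarrow> nat list \<times> nat list set \<Rightarrow> bool pmf" where
  "slot_pmf k p P = (\<lambda>(xs, C). bernoulli_pmf (pmf P C * p / fact k))"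

definition slot_prob :: "nat \<Rightarrow> real \<Rightarrow> nat list set pmf \<Rightarrow> nat list \<times> nat list set \<Rightarrow> real" where
  "slot_prob k p P j = pmf (slot_pmf k p P j) True"

definition slots_on :: "nat \<Rightarrow> nat \<Rightarrow> nat list set pmf \<Rightarrow> nat set \<Rightarrow> (nat list \<times> nat list set) set" where
  "slots_on n k P S = {j \<in> hat_slots n k P. set (fst j) = S}"

definition hat_local :: "nat \<Rightarrow> nat \<Rightarrow> real \<Rightarrow> nat list set pmf \<Rightarrow> nat set \<Rightarrow> (nat list \<times> nat list set \<Rightarrow> bool) pmf" where
  "hat_local n k p P S = Pi_pmf (slots_on n k P S) False (slot_pmf k p P)"

abbreviation group_by_set :: "nat \<Rightarrow> nat \<Rightarrow> nat list set pmf
    \<Rightarrow> (nat list \<times> nat list set \<Rightarrow> bool) \<Rightarrow> nat set \<Rightarrow> nat list \<times> nat list set \<Rightarrow> bool" where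
  "group_by_set n k P \<equiv> regroup (hat_slots n k P) (\<lambda>j. set (fst j)) (ksets n k) False"

lemma CSPhat_model_grouped:
  assumes "finite (set_pmf P)"
  shows "map_pmf (group_by_set n k P) (CSPhat_model k n p P)
           = Pi_pmf (ksets n k) (\<lambda>_. False) (hat_local n k p P)"
proof -
  have "CSPhat_model k n p P = Pi_pmf (hat_slots n k P) False (slot_pmf k p P)"
    by (simp add: CSPhat_model_def hat_slots_def slot_pmf_def)
  moreover have "(\<lambda>j. set (fst j)) ` hat_slots n k P \<subseteq> ksets n k"
    by (auto simp: hat_slots_def ktuples_def ksets_def distinct_card)
  ultimately show ?thesis
    using assms unfolding hat_local_def slots_on_def
    by (simp add: Pi_pmf_regroup finite_ktuples hat_slots_def finite_ksets)
qed

lemma finite_slots_on: "finite (set_pmf P) \<Longrightarrow> finite (slots_on n k P S)"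
  unfolding slots_on_def hat_slots_def using finite_ktuples by auto

lemma slots_on_eq:
  assumes "S \<in> ksets n k"
  shows "slots_on n k P S = permutations_of_set S \<times> set_pmf P"
proof (intro set_eqI iffI)
  fix j assume "j \<in> slots_on n k P S"
  thus "j \<in> permutations_of_set S \<times> set_pmf P"
    by (cases j) (simp add: slots_on_def hat_slots_def ktuples_def permutations_of_set_def)
next
  fix j assume j: "j \<in> permutations_of_set S \<times> set_pmf P"
  obtain xs C where jj: "j = (xs, C)" by (cases j)
  with j have xs: "distinct xs" "set xs = S" and C: "C \<in> set_pmf P"
    by (auto simp: permutations_of_set_def)
  have "length xs = k" using distinct_card[OF xs(1)] xs(2) assms by (simp add: ksets_def)
  with xs C assms show "j \<in> slots_on n k P S"
    by (simp add: jj slots_on_def hat_slots_def ktuples_def ksets_def)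
qed

lemma slot_prob_eq:
  assumes "0 \<le> p" "p \<le> 1"
  shows "slot_prob k p P (xs, C) = pmf P C * p / fact k"
proof -
  have "pmf P C * p \<le> 1" using assms by (intro mult_le_one pmf_le_1) auto
  moreover have "(1::real) \<le> fact k" by (rule fact_ge_1)
  ultimately have "pmf P C * p \<le> fact k" by linarith
  hence "pmf P C * p / fact k \<le> 1" by simp
  thus ?thesis using assms by (simp add: slot_prob_def slot_pmf_def)
qed

lemma slot_prob_bounds: "0 \<le> slot_prob k p P j \<and> slot_prob k p P j \<le> 1"
  by (simp add: slot_prob_def pmf_le_1)

lemma sum_slot_prob:
  assumes S: "S \<in> ksets n k" and p: "0 \<le> p" "p \<le> 1" and fin: "finite (set_pmf P)"
  shows "(\<Sum>j\<in>slots_on n k P S. slot_prob k p P j) = p"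
proof -
  have fS: "finite S" and cS: "card S = k"
    using S by (auto simp: ksets_def intro: finite_subset)
  have "(\<Sum>j\<in>slots_on n k P S. slot_prob k p P j)
      = (\<Sum>(xs, C)\<in>permutations_of_set S \<times> set_pmf P. pmf P C * p / fact k)"
    unfolding slots_on_eq[OF S] using p by (intro sum.cong refl) (auto simp: slot_prob_eq)
  also have "\<dots> = (\<Sum>xs\<in>permutations_of_set S. \<Sum>C\<in>set_pmf P. pmf P C * p / fact k)"
    by (rule sum.cartesian_product[symmetric])
  also have "\<dots> = fact k * ((\<Sum>C\<in>set_pmf P. pmf P C) * p / fact k)"
    using fS cS by (simp add: sum_divide_distrib[symmetric] sum_distrib_right[symmetric])
  also have "(\<Sum>C\<in>set_pmf P. pmf P C) = 1" using fin by (intro sum_pmf_eq_1) auto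
  finally show ?thesis by simp
qed

lemma pmf_hat_local_empty:
  assumes "finite (set_pmf P)"
  shows "pmf (hat_local n k p P S) (\<lambda>_. False) = (\<Prod>j\<in>slots_on n k P S. 1 - slot_prob k p P j)"
  using finite_slots_on[OF assms]
  by (simp add: hat_local_def pmf_Pi' pmf_bool_False slot_prob_def)

lemma pmf_hat_local_single:
  assumes x: "x \<in> slots_on n k P S" and fin: "finite (set_pmf P)"
  shows "pmf (hat_local n k p P S) (\<lambda>j. j = x)
           = slot_prob k p P x * (\<Prod>j\<in>slots_on n k P S - {x}. 1 - slot_prob k p P j)"
proof -
  have f: "finite (slots_on n k P S)" using finite_slots_on[OF fin] .
  have "pmf (hat_local n k p P S) (\<lambda>j. j = x) = (\<Prod>j\<in>slots_on n k P S. pmf (slot_pmf k p P j) (j = x))"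
    unfolding hat_local_def using x f by (subst pmf_Pi') auto
  also have "\<dots> = pmf (slot_pmf k p P x) True * (\<Prod>j\<in>slots_on n k P S - {x}. pmf (slot_pmf k p P j) (j = x))"
    using prod.remove[OF f x, of "\<lambda>j. pmf (slot_pmf k p P j) (j = x)"] by simp
  also have "(\<Prod>j\<in>slots_on n k P S - {x}. pmf (slot_pmf k p P j) (j = x))
           = (\<Prod>j\<in>slots_on n k P S - {x}. 1 - slot_prob k p P j)"
    by (intro prod.cong refl) (auto simp: pmf_bool_False slot_prob_def)
  finally show ?thesis by (simp add: slot_prob_def)
qed

lemma pmf_hat_local_single_bounds:
  assumes x: "x \<in> slots_on n k P S" and fin: "finite (set_pmf P)"
    and S: "S \<in> ksets n k" and p: "0 \<le> p" "p \<le> 1"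
  shows "slot_prob k p P x * (1 - p) \<le> pmf (hat_local n k p P S) (\<lambda>j. j = x)"
    and "pmf (hat_local n k p P S) (\<lambda>j. j = x) \<le> slot_prob k p P x"
proof -
  let ?J = "slots_on n k P S" and ?q = "slot_prob k p P"
  have f: "finite ?J" using finite_slots_on[OF fin] .
  have "(\<Sum>j\<in>?J - {x}. ?q j) \<le> (\<Sum>j\<in>?J. ?q j)"
    by (rule sum_mono2[OF f]) (auto simp: slot_prob_bounds)
  hence "1 - p \<le> 1 - (\<Sum>j\<in>?J - {x}. ?q j)"
    using sum_slot_prob[OF S p fin] by simp
  also have "\<dots> \<le> (\<Prod>j\<in>?J - {x}. 1 - ?q j)"
    using f slot_prob_bounds by (intro one_minus_sum_le_prod) auto
  finally show "?q x * (1 - p) \<le> pmf (hat_local n k p P S) (\<lambda>j. j = x)"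
    using slot_prob_bounds pmf_hat_local_single[OF x fin] by (simp add: mult_left_mono)
  have "(\<Prod>j\<in>?J - {x}. 1 - ?q j) \<le> 1"
    using slot_prob_bounds by (intro prod_le_1) auto
  thus "pmf (hat_local n k p P S) (\<lambda>j. j = x) \<le> ?q x"
    using slot_prob_bounds pmf_hat_local_single[OF x fin] by (simp add: mult_left_le)
qed

lemma pmf_hat_local_empty_bound:
  assumes fin: "finite (set_pmf P)" and S: "S \<in> ksets n k" and p: "0 \<le> p" "p \<le> 1"
  shows "1 - p \<le> pmf (hat_local n k p P S) (\<lambda>_. False)"
proof -
  have "1 - (\<Sum>j\<in>slots_on n k P S. slot_prob k p P j) \<le> (\<Prod>j\<in>slots_on n k P S. 1 - slot_prob k p P j)"
    using slot_prob_bounds by (intro one_minus_sum_le_prod finite_slots_on[OF fin]) auto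
  thus ?thesis by (simp add: sum_slot_prob[OF S p fin] pmf_hat_local_empty[OF fin])
qed

definition at_most_one :: "('a \<Rightarrow> bool) \<Rightarrow> bool" where
  "at_most_one B \<longleftrightarrow> (\<forall>a b. B a \<longrightarrow> B b \<longrightarrow> a = b)"

definition chosen :: "('a \<Rightarrow> bool) \<Rightarrow> 'a option" where
  "chosen B = (if \<exists>x. B x then Some (SOME x. B x) else None)"

lemma chosen_SomeD: "chosen B = Some x \<Longrightarrow> B x"
  unfolding chosen_def by (auto split: if_splits intro: someI_ex)

lemma chosen_unique: "at_most_one B \<Longrightarrow> B x \<Longrightarrow> chosen B = Some x"
  unfolding chosen_def at_most_one_def by (auto intro: some_equality)

lemma chosen_single: "chosen (\<lambda>j. j = x) = Some x"
  by (simp add: chosen_def)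

definition single_or_fail :: "('a \<Rightarrow> bool) \<Rightarrow> 'a option option" where
  "single_or_fail B = (if at_most_one B then Some (chosen B) else None)"

lemma single_or_fail_empty: "single_or_fail (\<lambda>_. False) = Some None"
  by (simp add: single_or_fail_def at_most_one_def chosen_def)

lemma pmf_single_or_fail_None: "pmf (map_pmf single_or_fail M) None = 1 - measure M {B. at_most_one B}"
proof -
  have failure: "single_or_fail -` {None} = UNIV - {B. at_most_one B}"
    by (auto simp: single_or_fail_def)
  show ?thesis
    unfolding pmf_map failure using measure_pmf.prob_compl[of "{B. at_most_one B}" M] by simp
qed

lemma pmf_single_or_fail_single: "pmf (map_pmf single_or_fail M) (Some (Some x)) = pmf M (\<lambda>j. j = x)"
proof -
  have "single_or_fail B = Some (Some x) \<longleftrightarrow> B = (\<lambda>j. j = x)" for B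
  proof
    assume "single_or_fail B = Some (Some x)"
    hence "at_most_one B" "B x"
      by (auto simp: single_or_fail_def split: if_splits intro: chosen_SomeD)
    thus "B = (\<lambda>j. j = x)" unfolding at_most_one_def fun_eq_iff by blast
  qed (simp add: single_or_fail_def at_most_one_def chosen_single)
  hence "single_or_fail -` {Some (Some x)} = {\<lambda>j. j = x}" by auto
  thus ?thesis by (simp add: pmf_map measure_pmf_single)
qed

lemma hat_local_at_most_one:
  assumes fin: "finite (set_pmf P)" and S: "S \<in> ksets n k" and p: "0 \<le> p" "p \<le> 1"
  shows "1 - p\<^sup>2 \<le> measure (hat_local n k p P S) {B. at_most_one B}"
proof -
  let ?J = "slots_on n k P S" and ?M = "hat_local n k p P S" and ?q = "slot_prob k p P"
  let ?single = "(\<lambda>x j. j = x) ` ?J"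
  have f: "finite ?J" using finite_slots_on[OF fin] .
  have "(\<Sum>x\<in>?J. ?q x * (1 - p)) = p * (1 - p)"
    by (simp add: sum_distrib_right[symmetric] sum_slot_prob[OF S p fin])
  hence "1 - p\<^sup>2 = (1 - p) + (\<Sum>x\<in>?J. ?q x * (1 - p))"
    by (simp add: power2_eq_square algebra_simps)
  also have "\<dots> \<le> pmf ?M (\<lambda>_. False) + (\<Sum>x\<in>?J. pmf ?M (\<lambda>j. j = x))"
    using pmf_hat_local_empty_bound[OF fin S p] pmf_hat_local_single_bounds(1)[OF _ fin S p]
    by (intro add_mono sum_mono) auto
  also have "(\<Sum>x\<in>?J. pmf ?M (\<lambda>j. j = x)) = sum (pmf ?M) ?single"
    by (subst sum.reindex) (auto simp: inj_on_def fun_eq_iff)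
  also have "pmf ?M (\<lambda>_. False) + sum (pmf ?M) ?single = sum (pmf ?M) (insert (\<lambda>_. False) ?single)"
    using f by (subst sum.insert) (auto simp: fun_eq_iff)
  also have "\<dots> = measure ?M (insert (\<lambda>_. False) ?single)"
    using f by (simp add: measure_measure_pmf_finite)
  also have "\<dots> \<le> measure ?M {B. at_most_one B}"
    by (intro measure_pmf.finite_measure_mono) (auto simp: at_most_one_def)
  finally show ?thesis .
qed

lemma pmf_edge_pmf:
  assumes S: "S \<in> ksets n k" and p: "0 \<le> p" "p \<le> 1" and fin: "finite (set_pmf P)"
  shows "pmf (edge_pmf p P S) (Some x) = (if x \<in> slots_on n k P S then slot_prob k p P x else 0)"
proof -
  obtain xs C where x: "x = (xs, C)" by (cases x)
  have fS: "finite S" and cS: "card S = k" using S by (auto simp: ksets_def intro: finite_subset)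
  have ne: "permutations_of_set S \<noteq> {}" using fS by (simp add: permutations_of_set_nonempty)
  have orderings: "do { xs \<leftarrow> pmf_of_set {xs. distinct xs \<and> set xs = S}; C \<leftarrow> P; return_pmf (Some (xs, C)) }
        = map_pmf Some (pair_pmf (pmf_of_set (permutations_of_set S)) P)"
    by (simp add: pair_pmf_def map_bind_pmf permutations_of_set_def conj_commute)
  have "pmf (edge_pmf p P S) (Some x) = p * (indicator (permutations_of_set S) xs / fact k * pmf P C)"
    using p fS ne cS by (simp add: edge_pmf_def orderings pmf_bind pmf_map_inj' pmf_pair x)
  also have "\<dots> = (if x \<in> slots_on n k P S then slot_prob k p P x else 0)"
    using S p x by (auto simp: slots_on_eq slot_prob_eq indicator_def set_pmf_eq)
  finally show ?thesis .
qed

lemma CSP_satisfiable_cong: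
  "(\<And>S. S \<in> ksets n k \<Longrightarrow> F S = F' S) \<Longrightarrow> CSP_satisfiable d k n F = CSP_satisfiable d k n F'"
  unfolding CSP_satisfiable_def by auto

lemma CSP_satisfiable_delete_edges:
  assumes "CSP_satisfiable d k n F" "\<forall>S. F' S = F S \<or> F' S = None"
  shows "CSP_satisfiable d k n F'"
proof -
  have "(case F' S of None \<Rightarrow> True | Some (xs, C) \<Rightarrow> sat_constraint \<sigma> xs C)"
    if "case F S of None \<Rightarrow> True | Some (xs, C) \<Rightarrow> sat_constraint \<sigma> xs C" for S \<sigma>
    using that assms(2)[rule_format, of S] by auto
  with assms(1) show ?thesis unfolding CSP_satisfiable_def by blast
qed

lemma CSPhat_sat_imp_chosen_sat:
  assumes "CSPhat_satisfiable d k n P G"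
  shows "CSP_satisfiable d k n (\<lambda>S. chosen (group_by_set n k P G S))"
proof -
  from assms obtain \<sigma> where \<sigma>: "\<sigma> \<in> assignments d n"
    and sat: "\<forall>xs\<in>ktuples n k. \<forall>C\<in>set_pmf P. G (xs, C) \<longrightarrow> sat_constraint \<sigma> xs C"
    unfolding CSPhat_satisfiable_def by blast
  have "sat_constraint \<sigma> xs C"
    if S: "S \<in> ksets n k" and ch: "chosen (group_by_set n k P G S) = Some (xs, C)" for S xs C
  proof -
    from chosen_SomeD[OF ch] S have "(xs, C) \<in> hat_slots n k P" "G (xs, C)"
      by (auto simp: regroup_def split: if_splits)
    with sat show ?thesis by (auto simp: hat_slots_def)
  qed
  with \<sigma> show ?thesis unfolding CSP_satisfiable_def by (fastforce split: option.splits)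
qed

lemma single_or_fail_sat_imp_CSPhat_sat:
  assumes no_fail: "\<forall>S\<in>ksets n k. single_or_fail (group_by_set n k P G S) \<noteq> None"
    and sat: "CSP_satisfiable d k n (\<lambda>S. the (single_or_fail (group_by_set n k P G S)))"
  shows "CSPhat_satisfiable d k n P G"
proof -
  have one: "\<forall>S\<in>ksets n k. at_most_one (group_by_set n k P G S)"
    using no_fail by (auto simp: single_or_fail_def split: if_splits)
  hence "CSP_satisfiable d k n (\<lambda>S. the (single_or_fail (group_by_set n k P G S)))
       = CSP_satisfiable d k n (\<lambda>S. chosen (group_by_set n k P G S))"
    by (intro CSP_satisfiable_cong) (simp add: single_or_fail_def)
  with sat obtain \<sigma> where \<sigma>: "\<sigma> \<in> assignments d n"
    and h: "\<forall>S\<in>ksets n k. case chosen (group_by_set n k P G S) of None \<Rightarrow> True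
                            | Some (xs, C) \<Rightarrow> sat_constraint \<sigma> xs C"
    unfolding CSP_satisfiable_def by blast
  have "sat_constraint \<sigma> xs C"
    if xs: "xs \<in> ktuples n k" and C: "C \<in> set_pmf P" and G: "G (xs, C)" for xs C
  proof -
    have S: "set xs \<in> ksets n k" using xs by (auto simp: ktuples_def ksets_def distinct_card)
    have "group_by_set n k P G (set xs) (xs, C)"
      using S xs C G by (simp add: regroup_def hat_slots_def)
    with one S have "chosen (group_by_set n k P G (set xs)) = Some (xs, C)"
      by (intro chosen_unique) auto
    with h S show ?thesis by force
  qed
  with \<sigma> show ?thesis unfolding CSPhat_satisfiable_def by blast
qed

lemma sat_prob_bounds:
  "0 \<le> CSP_sat_prob d k P n p \<and> CSP_sat_prob d k P n p \<le> 1"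
  "0 \<le> CSPhat_sat_prob d k P n p \<and> CSPhat_sat_prob d k P n p \<le> 1"
  by (simp_all add: CSP_sat_prob_def CSPhat_sat_prob_def)

lemma CSP_sat_prob_nonneg_param: "CSP_sat_prob d k P n (max 0 p) = CSP_sat_prob d k P n p"
proof -
  have "edge_pmf (max 0 p) P = edge_pmf p P"
    by (rule ext) (simp only: edge_pmf_def bernoulli_pmf_nonneg_param)
  thus ?thesis by (simp add: CSP_sat_prob_def CSP_model_def)
qed

lemma CSPhat_sat_prob_nonneg_param: "CSPhat_sat_prob d k P n (max 0 p) = CSPhat_sat_prob d k P n p"
proof -
  have "max 0 (pmf P C * p / fact k) = pmf P C * max 0 p / fact k" for C
  proof (cases "0 \<le> p")
    case False
    hence "pmf P C * p / fact k \<le> 0" by (simp add: divide_nonpos_pos mult_nonneg_nonpos)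
    with False show ?thesis by (simp add: max_def)
  qed (simp add: max_absorb2)
  hence "bernoulli_pmf (pmf P C * max 0 p / fact k) = bernoulli_pmf (pmf P C * p / fact k)" for C
    by (metis bernoulli_pmf_nonneg_param)
  thus ?thesis by (simp add: CSPhat_sat_prob_def CSPhat_model_def)
qed

section \<open>Comparing the two models for fixed n\<close>

text \<open>Comparison (1): CSP with p' \<le> p (1 - p) is a thinning of CSPhat with p.\<close>
lemma CSPhat_sat_le_CSP_sat:
  assumes fin: "finite (set_pmf P)" and p: "0 \<le> p" "p \<le> 1"
    and p': "0 \<le> p'" "p' \<le> p * (1 - p)"
  shows "CSPhat_sat_prob d k P n p \<le> CSP_sat_prob d k P n p'"
proof -
  let ?I = "ksets n k" and ?Q = "CSP_satisfiable d k n"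
  let ?E = "{F. (\<forall>S\<in>?I. F S \<noteq> None) \<and> ?Q (\<lambda>S. the (F S))}"
  define D where "D = (\<lambda>S. map_pmf chosen (hat_local n k p P S))"
  have p'1: "p' \<le> 1" using p p' mult_left_le[of "1 - p" p] by simp
  have dominated: "pmf (map_pmf Some (edge_pmf p' P S)) (Some (Some x)) \<le> 1 * pmf (D S) (Some x)"
    if S: "S \<in> ?I" for S x
  proof (cases "x \<in> slots_on n k P S")
    case True
    obtain xs C where x: "x = (xs, C)" by (cases x)
    have "pmf (map_pmf Some (edge_pmf p' P S)) (Some (Some x)) = pmf P C * p' / fact k"
      using pmf_edge_pmf[OF S p'(1) p'1 fin] True x p'(1) p'1 by (simp add: pmf_map_inj' slot_prob_eq)
    also have "\<dots> \<le> pmf P C * (p * (1 - p)) / fact k"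
      using p' by (intro divide_right_mono mult_left_mono) auto
    also have "\<dots> = slot_prob k p P x * (1 - p)" using x p by (simp add: slot_prob_eq)
    also have "\<dots> \<le> pmf (hat_local n k p P S) (\<lambda>j. j = x)"
      by (rule pmf_hat_local_single_bounds(1)[OF True fin S p])
    also have "\<dots> \<le> measure (hat_local n k p P S) (chosen -` {Some x})"
      by (auto simp: measure_pmf_single[symmetric] chosen_single intro!: measure_pmf.finite_measure_mono)
    finally show ?thesis by (simp add: D_def pmf_map)
  next
    case False
    thus ?thesis using pmf_edge_pmf[OF S p'(1) p'1 fin] by (simp add: pmf_map_inj' D_def)
  qed
  have "CSPhat_sat_prob d k P n p
      \<le> measure (CSPhat_model k n p P) {G. ?Q (\<lambda>S. chosen (group_by_set n k P G S))}"
    unfolding CSPhat_sat_prob_def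
    by (intro measure_pmf.finite_measure_mono) (auto intro: CSPhat_sat_imp_chosen_sat)
  also have "\<dots> = measure (Pi_pmf ?I (\<lambda>_. False) (hat_local n k p P)) {H. ?Q (\<lambda>S. chosen (H S))}"
    by (simp flip: CSPhat_model_grouped[OF fin])
  also have "\<dots> = measure (Pi_pmf ?I None D) {F. ?Q F}"
    unfolding D_def by (subst Pi_pmf_map[OF finite_ksets]) (simp_all add: o_def chosen_def)
  also have "\<dots> = (\<Prod>S\<in>?I. 1) * measure (Pi_pmf ?I None D) {F. ?Q F}" by simp
  also have "\<dots> \<le> measure (Pi_pmf ?I (Some None) (\<lambda>S. map_pmf Some (edge_pmf p' P S))) ?E"
    using dominated CSP_satisfiable_delete_edges
    by (intro Pi_pmf_thinning_bound[OF finite_ksets]) (simp_all add: pmf_map_inj' pmf_map_Some_None)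
  also have "\<dots> = measure (map_pmf (\<lambda>h. Some \<circ> h) (Pi_pmf ?I None (edge_pmf p' P))) ?E"
    by (subst Pi_pmf_map[OF finite_ksets]) simp_all
  also have "\<dots> = CSP_sat_prob d k P n p'"
    by (simp add: CSP_sat_prob_def CSP_model_def o_def)
  finally show ?thesis .
qed

lemma single_or_fail_dominated:
  assumes fin: "finite (set_pmf P)" and S: "S \<in> ksets n k"
    and p: "0 \<le> p" "p \<le> 1" "p \<le> (1 - p) * p'" and p': "0 \<le> p'" "p' \<le> 1"
  shows "pmf (map_pmf single_or_fail (hat_local n k p P S)) (Some (Some x))
           \<le> measure (hat_local n k p P S) {B. at_most_one B} * pmf (edge_pmf p' P S) (Some x)"
proof (cases "x \<in> slots_on n k P S")
  case True
  obtain xs C where x: "x = (xs, C)" by (cases x)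
  have "pmf (map_pmf single_or_fail (hat_local n k p P S)) (Some (Some x)) \<le> pmf P C * p / fact k"
    using pmf_hat_local_single_bounds(2)[OF True fin S p(1,2)] x p
    by (simp add: pmf_single_or_fail_single slot_prob_eq)
  also have "\<dots> \<le> pmf P C * ((1 - p) * p') / fact k"
    using p by (intro divide_right_mono mult_left_mono) auto
  also have "\<dots> = (1 - p) * (pmf P C * p' / fact k)" by simp
  also have "\<dots> \<le> measure (hat_local n k p P S) {B. at_most_one B} * (pmf P C * p' / fact k)"
  proof (rule mult_right_mono)
    have "p\<^sup>2 \<le> p" using p(1,2) by (simp add: power2_eq_square mult_left_le_one_le)
    thus "1 - p \<le> measure (hat_local n k p P S) {B. at_most_one B}"
      using hat_local_at_most_one[OF fin S p(1,2)] by linarith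
  qed (use p' in simp)
  finally show ?thesis using pmf_edge_pmf[OF S p' fin] True x p' by (simp add: slot_prob_eq)
next
  case False
  have "pmf (hat_local n k p P S) (\<lambda>j. j = x) = 0"
    unfolding hat_local_def by (rule pmf_Pi_outside[OF finite_slots_on[OF fin]]) (use False in blast)
  thus ?thesis by (simp add: pmf_single_or_fail_single)
qed

text \<open>Comparison (2): on the event that no k-set carries two constraints, CSPhat with p
  is a thinning of CSP with p' whenever p \<le> (1 - p) p'.\<close>
lemma CSP_sat_le_CSPhat_sat:
  assumes fin: "finite (set_pmf P)"
    and p: "0 \<le> p" "p \<le> 1" "p \<le> (1 - p) * p'" and p': "0 \<le> p'" "p' \<le> 1"
  shows "(1 - p\<^sup>2) ^ card (ksets n k) * CSP_sat_prob d k P n p' \<le> CSPhat_sat_prob d k P n p"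
proof -
  let ?I = "ksets n k" and ?Q = "CSP_satisfiable d k n"
  let ?E = "{F. (\<forall>S\<in>?I. F S \<noteq> None) \<and> ?Q (\<lambda>S. the (F S))}"
  define g where "g = (\<lambda>S. measure (hat_local n k p P S) {B. at_most_one B})"
  have g: "1 - p\<^sup>2 \<le> g S" "0 \<le> g S" "g S \<le> 1" if "S \<in> ?I" for S
    using hat_local_at_most_one[OF fin that p(1,2)] by (simp_all add: g_def)
  have "(1 - p\<^sup>2) ^ card ?I = (\<Prod>S\<in>?I. 1 - p\<^sup>2)" by simp
  also have "\<dots> \<le> (\<Prod>S\<in>?I. g S)"
    using g p(1,2) by (intro prod_mono) (auto simp: power2_eq_square mult_le_one)
  finally have "(1 - p\<^sup>2) ^ card ?I * CSP_sat_prob d k P n p' \<le> (\<Prod>S\<in>?I. g S) * CSP_sat_prob d k P n p'"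
    by (intro mult_right_mono) (simp_all add: sat_prob_bounds)
  also have "\<dots> \<le> measure (Pi_pmf ?I (Some None) (\<lambda>S. map_pmf single_or_fail (hat_local n k p P S))) ?E"
    unfolding CSP_sat_prob_def CSP_model_def
    using g single_or_fail_dominated[OF fin _ p p'] CSP_satisfiable_delete_edges
    by (intro Pi_pmf_thinning_bound[OF finite_ksets]) (auto simp: g_def pmf_single_or_fail_None)
  also have "\<dots> = measure (CSPhat_model k n p P) (group_by_set n k P -` ((\<lambda>H. single_or_fail \<circ> H) -` ?E))"
    by (subst Pi_pmf_map[OF finite_ksets, of _ "\<lambda>_. False"])
       (simp_all add: single_or_fail_empty measure_map_pmf flip: CSPhat_model_grouped[OF fin])
  also have "\<dots> \<le> CSPhat_sat_prob d k P n p"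
    unfolding CSPhat_sat_prob_def
    by (intro measure_pmf.finite_measure_mono) (auto intro: single_or_fail_sat_imp_CSPhat_sat)
  finally show ?thesis .
qed

section \<open>From the comparisons to thresholds\<close>

lemma bigO_1_bounded:
  fixes c :: "nat \<Rightarrow> real"
  assumes "c \<in> O(\<lambda>_. 1)"
  obtains B where "eventually (\<lambda>n. c n \<le> B) sequentially"
proof -
  from assms obtain B where "eventually (\<lambda>n. norm (c n) \<le> B * norm (1::real)) at_top"
    by (rule landau_o.bigE)
  hence "eventually (\<lambda>n. c n \<le> B) sequentially" by eventually_elim simp
  thus ?thesis by (rule that)
qed

lemma threshold_scale_tendsto_0:
  fixes c :: "nat \<Rightarrow> real"
  assumes k: "k \<ge> 2" and c_pos: "\<And>n. 0 < c n" and cB: "eventually (\<lambda>n. c n \<le> B) sequentially"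
  shows "(\<lambda>n. c n / real n ^ (k - 1)) \<longlonglongrightarrow> 0"
proof (rule tendsto_sandwich[of "\<lambda>_. 0" _ _ "\<lambda>n. B / real n ^ (k - 1)"])
  show "eventually (\<lambda>n. 0 \<le> c n / real n ^ (k - 1)) sequentially"
    using c_pos by (simp add: less_imp_le)
  show "eventually (\<lambda>n. c n / real n ^ (k - 1) \<le> B / real n ^ (k - 1)) sequentially"
    using cB by eventually_elim (simp add: divide_right_mono)
  have "filterlim (\<lambda>n. real n ^ (k - 1)) at_top sequentially"
    using k by (intro filterlim_pow_at_top filterlim_real_sequentially) auto
  thus "(\<lambda>n. B / real n ^ (k - 1)) \<longlonglongrightarrow> 0"
    by (intro tendsto_divide_0[OF tendsto_const] filterlim_at_top_imp_at_infinity)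
qed simp

lemma card_ksets_times_square_le:
  fixes x :: real
  assumes k: "k \<ge> 2" and n: "n \<ge> 1" and x: "0 \<le> x" "x \<le> B"
  shows "real (card (ksets n k)) * (a * (x / real n ^ (k - 1)))\<^sup>2 \<le> a\<^sup>2 * B\<^sup>2 / real n ^ (k - 2)"
proof -
  have npos: "0 < real n" using n by simp
  have exponent: "(real n ^ (k - 1))\<^sup>2 = real n ^ k * real n ^ (k - 2)"
    using k by (simp flip: power_mult power_add) (simp add: algebra_simps numeral_2_eq_2)
  have "(a * (x / real n ^ (k - 1)))\<^sup>2 = a\<^sup>2 * x\<^sup>2 / (real n ^ k * real n ^ (k - 2))"
    by (simp only: power_mult_distrib power_divide exponent times_divide_eq_right)
  also have "\<dots> \<le> a\<^sup>2 * B\<^sup>2 / (real n ^ k * real n ^ (k - 2))"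
    using x npos by (intro divide_right_mono mult_left_mono power_mono) auto
  finally have "real (card (ksets n k)) * (a * (x / real n ^ (k - 1)))\<^sup>2
      \<le> real n ^ k * (a\<^sup>2 * B\<^sup>2 / (real n ^ k * real n ^ (k - 2)))"
    using real_card_ksets_le by (intro mult_mono) auto
  also have "\<dots> = a\<^sup>2 * B\<^sup>2 / real n ^ (k - 2)"
    using npos by simp
  finally show ?thesis .
qed

text \<open>Hence the correction factor of comparison (2) at p = q x / n^(k-1) is at least
  exp(-2 a^2 B^2 / n^(k-2)), a constant for k = 2 and tending to 1 for k \<ge> 3.\<close>
lemma ksets_factor_lower_bound:
  fixes x q :: real
  assumes k: "k \<ge> 2" and n: "n \<ge> 1" and x: "0 \<le> x" "x \<le> B"
    and q: "0 \<le> q" "q\<^sup>2 \<le> a\<^sup>2" and half: "q * (x / real n ^ (k - 1)) \<le> 1/2"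
  shows "exp (- 2 * (a\<^sup>2 * B\<^sup>2 / real n ^ (k - 2)))
           \<le> (1 - (q * (x / real n ^ (k - 1)))\<^sup>2) ^ card (ksets n k)"
proof -
  let ?p = "q * (x / real n ^ (k - 1))" and ?N = "card (ksets n k)"
  have "real ?N * ?p\<^sup>2 \<le> q\<^sup>2 * B\<^sup>2 / real n ^ (k - 2)"
    by (rule card_ksets_times_square_le[OF k n x])
  also have "\<dots> \<le> a\<^sup>2 * B\<^sup>2 / real n ^ (k - 2)"
    using q by (intro divide_right_mono mult_right_mono) auto
  finally have "exp (- 2 * (a\<^sup>2 * B\<^sup>2 / real n ^ (k - 2))) \<le> exp (- 2 * real ?N * ?p\<^sup>2)"
    by simp
  also have "\<dots> \<le> (1 - ?p\<^sup>2) ^ ?N"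
  proof (rule exp_le_one_minus_pow)
    have "0 \<le> ?p" using q(1) x(1) by simp
    moreover have "?p \<le> 1" using half by linarith
    ultimately have "?p * ?p \<le> ?p" by (intro mult_left_le_one_le)
    thus "?p\<^sup>2 \<le> 1/2" using half unfolding power2_eq_square by linarith
  qed (use q(1) x(1) in simp)
  finally show ?thesis .
qed

lemma eventually_CSPhat_le_CSP:
  assumes fin: "finite (set_pmf P)" and u: "u \<longlonglongrightarrow> 0" "\<And>n. 0 \<le> u n"
    and ab: "0 < a" "b < a"
  shows "eventually (\<lambda>n. CSPhat_sat_prob d k P n (a * u n) \<le> CSP_sat_prob d k P n (b * u n)) sequentially"
proof -
  have "eventually (\<lambda>n. a * a * u n < a - b) sequentially"
    using ab by (intro order_tendstoD(2)[OF tendsto_mult_right_zero[OF u(1)]]) simp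
  moreover have "eventually (\<lambda>n. a * u n < 1) sequentially"
    by (intro order_tendstoD(2)[OF tendsto_mult_right_zero[OF u(1)]]) simp
  ultimately show ?thesis
  proof eventually_elim
    case (elim n)
    let ?p = "a * u n"
    have p: "0 \<le> ?p" "?p \<le> 1" using elim ab u(2)[of n] by auto
    have "b * u n \<le> (a - a * a * u n) * u n"
      using elim u(2)[of n] by (intro mult_right_mono) auto
    hence "b * u n \<le> ?p * (1 - ?p)" by (simp add: algebra_simps)
    moreover have "0 \<le> ?p * (1 - ?p)" using p by simp
    ultimately have "max 0 (b * u n) \<le> ?p * (1 - ?p)" by simp
    hence "CSPhat_sat_prob d k P n ?p \<le> CSP_sat_prob d k P n (max 0 (b * u n))"
      by (intro CSPhat_sat_le_CSP_sat[OF fin p]) auto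
    thus ?case by (simp only: CSP_sat_prob_nonneg_param)
  qed
qed

lemma eventually_CSP_le_CSPhat:
  fixes c :: "nat \<Rightarrow> real"
  assumes fin: "finite (set_pmf P)" and k: "k \<ge> 2"
    and c_pos: "\<And>n. 0 < c n" and cB: "eventually (\<lambda>n. c n \<le> B) sequentially"
    and ab: "a < b" "0 < b"
  defines "u \<equiv> \<lambda>n. c n / real n ^ (k - 1)"
  shows "eventually (\<lambda>n. exp (- 2 * (a\<^sup>2 * B\<^sup>2 / real n ^ (k - 2))) * CSP_sat_prob d k P n (b * u n)
                          \<le> CSPhat_sat_prob d k P n (a * u n)) sequentially"
proof -
  define a' where "a' = max 0 a"
  have a': "0 \<le> a'" "a' < b" "a'\<^sup>2 \<le> a\<^sup>2" using ab by (auto simp: a'_def max_def power2_eq_square)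
  have u_nonneg: "0 \<le> u n" for n using c_pos[of n] by (simp add: u_def)
  have u0: "u \<longlonglongrightarrow> 0" unfolding u_def by (rule threshold_scale_tendsto_0[OF k c_pos cB])
  have "eventually (\<lambda>n. a' * b * u n < b - a') sequentially"
    using a' by (intro order_tendstoD(2)[OF tendsto_mult_right_zero[OF u0]]) simp
  moreover have "eventually (\<lambda>n. b * u n < 1/2) sequentially"
    by (intro order_tendstoD(2)[OF tendsto_mult_right_zero[OF u0]]) simp
  ultimately show ?thesis using cB eventually_ge_at_top[of 1]
  proof eventually_elim
    case (elim n)
    let ?p = "a' * u n" and ?N = "card (ksets n k)"
    have p: "0 \<le> ?p" "?p \<le> b * u n" using a' u_nonneg[of n] by (auto intro: mult_right_mono)
    have "a' * b * u n * u n \<le> (b - a') * u n"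
      using elim u_nonneg[of n] by (intro mult_right_mono) auto
    hence "?p \<le> (1 - ?p) * (b * u n)" by (simp add: algebra_simps)
    hence comparison: "(1 - ?p\<^sup>2) ^ ?N * CSP_sat_prob d k P n (b * u n) \<le> CSPhat_sat_prob d k P n ?p"
      using elim p ab u_nonneg[of n] by (intro CSP_sat_le_CSPhat_sat[OF fin p(1)]) auto
    have half: "a' * (c n / real n ^ (k - 1)) \<le> 1/2" using p elim(2) unfolding u_def by linarith
    have "exp (- 2 * (a\<^sup>2 * B\<^sup>2 / real n ^ (k - 2))) \<le> (1 - ?p\<^sup>2) ^ ?N"
      unfolding u_def
      by (rule ksets_factor_lower_bound[OF k elim(4) less_imp_le[OF c_pos] elim(3) a'(1) a'(3) half])
    hence "exp (- 2 * (a\<^sup>2 * B\<^sup>2 / real n ^ (k - 2))) * CSP_sat_prob d k P n (b * u n)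
        \<le> CSPhat_sat_prob d k P n ?p"
      using comparison sat_prob_bounds by (meson mult_right_mono order_trans)
    moreover have "?p = max 0 (a * u n)" using u_nonneg[of n] by (simp add: a'_def max_mult_distrib_right)
    ultimately show ?case by (simp only: CSPhat_sat_prob_nonneg_param)
  qed
qed

lemma sharp_threshold_transfer:
  fixes sp sq :: "nat \<Rightarrow> real \<Rightarrow> real"
  assumes ST: "sharp_threshold k sp"
    and sq_bounds: "\<And>n p. 0 \<le> sq n p \<and> sq n p \<le> 1"
    and below: "\<And>c s t. (\<And>n. 0 < c n) \<Longrightarrow> c \<in> O(\<lambda>_. 1) \<Longrightarrow> s < t \<Longrightarrow> 0 < t \<Longrightarrow>
        \<exists>f. f \<longlonglongrightarrow> 1 \<and> (\<forall>\<^sub>F n in sequentially.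
               f n * sp n (t * c n / real n ^ (k - 1)) \<le> sq n (s * c n / real n ^ (k - 1)))"
    and above: "\<And>c s t. (\<And>n. 0 < c n) \<Longrightarrow> c \<in> O(\<lambda>_. 1) \<Longrightarrow> t < s \<Longrightarrow> 0 < t \<Longrightarrow>
        \<exists>\<delta>>0. \<forall>\<^sub>F n in sequentially.
               \<delta> * sq n (s * c n / real n ^ (k - 1)) \<le> sp n (t * c n / real n ^ (k - 1))"
  shows "sharp_threshold k sq"
proof -
  from ST obtain c where c_pos: "\<And>n. 0 < c n" and c_theta: "c \<in> \<Theta>(\<lambda>_. 1)"
    and sp_below: "\<And>\<epsilon>. \<epsilon> > 0 \<Longrightarrow> (\<lambda>n. sp n ((1 - \<epsilon>) * c n / real n ^ (k - 1))) \<longlonglongrightarrow> 1"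
    and sp_above: "\<And>\<epsilon>. \<epsilon> > 0 \<Longrightarrow> (\<lambda>n. sp n ((1 + \<epsilon>) * c n / real n ^ (k - 1))) \<longlonglongrightarrow> 0"
    unfolding sharp_threshold_def by blast
  have c_O: "c \<in> O(\<lambda>_. 1)" using c_theta by (rule bigthetaD1)
  have "(\<lambda>n. sq n ((1 - \<epsilon>) * c n / real n ^ (k - 1))) \<longlonglongrightarrow> 1 \<and>
        (\<lambda>n. sq n ((1 + \<epsilon>) * c n / real n ^ (k - 1))) \<longlonglongrightarrow> 0" if \<epsilon>: "\<epsilon> > 0" for \<epsilon>
  proof
    define \<epsilon>' where "\<epsilon>' = min \<epsilon> 1 / 2"
    have \<epsilon>': "0 < \<epsilon>'" "\<epsilon>' < \<epsilon>" "\<epsilon>' < 1" using \<epsilon> by (auto simp: \<epsilon>'_def)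
    have "\<exists>f. f \<longlonglongrightarrow> 1 \<and> (\<forall>\<^sub>F n in sequentially.
        f n * sp n ((1 - \<epsilon>') * c n / real n ^ (k - 1)) \<le> sq n ((1 - \<epsilon>) * c n / real n ^ (k - 1)))"
      by (rule below[OF c_pos c_O]) (use \<epsilon>' in simp_all)
    then obtain f where f: "f \<longlonglongrightarrow> 1" and f_le: "\<forall>\<^sub>F n in sequentially.
        f n * sp n ((1 - \<epsilon>') * c n / real n ^ (k - 1)) \<le> sq n ((1 - \<epsilon>) * c n / real n ^ (k - 1))"
      by blast
    have "(\<lambda>n. f n * sp n ((1 - \<epsilon>') * c n / real n ^ (k - 1))) \<longlonglongrightarrow> 1 * 1"
      by (rule tendsto_mult[OF f sp_below[OF \<epsilon>'(1)]])
    hence lim_below: "(\<lambda>n. f n * sp n ((1 - \<epsilon>') * c n / real n ^ (k - 1))) \<longlonglongrightarrow> 1" by simp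
    show "(\<lambda>n. sq n ((1 - \<epsilon>) * c n / real n ^ (k - 1))) \<longlonglongrightarrow> 1"
      by (rule tendsto_sandwich[OF f_le _ lim_below tendsto_const]) (simp add: sq_bounds)
    have "\<exists>\<delta>>0. \<forall>\<^sub>F n in sequentially.
        \<delta> * sq n ((1 + \<epsilon>) * c n / real n ^ (k - 1)) \<le> sp n ((1 + \<epsilon> / 2) * c n / real n ^ (k - 1))"
      by (rule above[OF c_pos c_O]) (use \<epsilon> in simp_all)
    then obtain \<delta> where \<delta>: "\<delta> > 0" and \<delta>_le: "\<forall>\<^sub>F n in sequentially.
        \<delta> * sq n ((1 + \<epsilon>) * c n / real n ^ (k - 1)) \<le> sp n ((1 + \<epsilon> / 2) * c n / real n ^ (k - 1))"
      by blast
    have "(\<lambda>n. sp n ((1 + \<epsilon> / 2) * c n / real n ^ (k - 1)) / \<delta>) \<longlonglongrightarrow> 0 / \<delta>"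
      using \<epsilon> by (intro tendsto_divide sp_above tendsto_const) (use \<delta> in simp_all)
    hence lim_above: "(\<lambda>n. sp n ((1 + \<epsilon> / 2) * c n / real n ^ (k - 1)) / \<delta>) \<longlonglongrightarrow> 0" by simp
    have sq_le: "\<forall>\<^sub>F n in sequentially. sq n ((1 + \<epsilon>) * c n / real n ^ (k - 1))
            \<le> sp n ((1 + \<epsilon> / 2) * c n / real n ^ (k - 1)) / \<delta>"
      using \<delta>_le by eventually_elim (simp add: pos_le_divide_eq[OF \<delta>] mult.commute)
    show "(\<lambda>n. sq n ((1 + \<epsilon>) * c n / real n ^ (k - 1))) \<longlonglongrightarrow> 0"
      by (rule tendsto_sandwich[OF _ sq_le tendsto_const lim_above]) (simp add: sq_bounds)
  qed
  with c_pos c_theta show ?thesis unfolding sharp_threshold_def by blast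
qed

lemma CSPhat_threshold_imp_CSP_threshold:
  assumes fin: "finite (set_pmf P)" and k: "k \<ge> 2"
    and ST: "sharp_threshold k (CSPhat_sat_prob d k P)"
  shows "sharp_threshold k (CSP_sat_prob d k P)"
proof (rule sharp_threshold_transfer[OF ST sat_prob_bounds(1)])
  fix c :: "nat \<Rightarrow> real" and s t :: real
  assume c: "\<And>n. 0 < c n" "c \<in> O(\<lambda>_. 1)"
  then obtain B where cB: "eventually (\<lambda>n. c n \<le> B) sequentially" by (auto elim: bigO_1_bounded)
  have u: "(\<lambda>n. c n / real n ^ (k - 1)) \<longlonglongrightarrow> 0" "\<And>n. 0 \<le> c n / real n ^ (k - 1)"
    using threshold_scale_tendsto_0[OF k c(1) cB] c(1) by (auto simp: less_imp_le)
  {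
    assume "s < t" "0 < t"
    hence "\<forall>\<^sub>F n in sequentially. 1 * CSPhat_sat_prob d k P n (t * c n / real n ^ (k - 1))
             \<le> CSP_sat_prob d k P n (s * c n / real n ^ (k - 1))"
      using eventually_CSPhat_le_CSP[OF fin u, of t s] by simp
    thus "\<exists>f. f \<longlonglongrightarrow> 1 \<and> (\<forall>\<^sub>F n in sequentially. f n * CSPhat_sat_prob d k P n (t * c n / real n ^ (k - 1))
             \<le> CSP_sat_prob d k P n (s * c n / real n ^ (k - 1)))"
      by blast
  next
    assume ts: "t < s" "0 < t"
    hence s: "0 < s" by simp
    have "\<forall>\<^sub>F n in sequentially. exp (- 2 * (t\<^sup>2 * B\<^sup>2)) * CSP_sat_prob d k P n (s * c n / real n ^ (k - 1))
             \<le> CSPhat_sat_prob d k P n (t * c n / real n ^ (k - 1))"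
      using eventually_CSP_le_CSPhat[OF fin k c(1) cB ts(1) s, where d = d] eventually_ge_at_top[of 1]
    proof eventually_elim
      case (elim n)
      have n1: "1 \<le> real n ^ (k - 2)" using elim(2) by simp
      have "t\<^sup>2 * B\<^sup>2 * 1 \<le> t\<^sup>2 * B\<^sup>2 * real n ^ (k - 2)" by (rule mult_left_mono[OF n1]) simp
      hence "t\<^sup>2 * B\<^sup>2 / real n ^ (k - 2) \<le> t\<^sup>2 * B\<^sup>2" using n1 by (simp add: divide_le_eq)
      hence "exp (- 2 * (t\<^sup>2 * B\<^sup>2)) * CSP_sat_prob d k P n (s * c n / real n ^ (k - 1))
          \<le> exp (- 2 * (t\<^sup>2 * B\<^sup>2 / real n ^ (k - 2))) * CSP_sat_prob d k P n (s * c n / real n ^ (k - 1))"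
        by (intro mult_right_mono) (simp_all add: sat_prob_bounds)
      with elim(1) show ?case by simp
    qed
    thus "\<exists>\<delta>>0. \<forall>\<^sub>F n in sequentially. \<delta> * CSP_sat_prob d k P n (s * c n / real n ^ (k - 1))
             \<le> CSPhat_sat_prob d k P n (t * c n / real n ^ (k - 1))"
      by (intro exI[of _ "exp (- 2 * (t\<^sup>2 * B\<^sup>2))"]) simp
  }
qed

text \<open>Converse direction: for k \<ge> 3 the factor of comparison (2) tends to 1.\<close>
lemma CSP_threshold_imp_CSPhat_threshold:
  assumes fin: "finite (set_pmf P)" and k: "k \<ge> 3"
    and ST: "sharp_threshold k (CSP_sat_prob d k P)"
  shows "sharp_threshold k (CSPhat_sat_prob d k P)"
proof (rule sharp_threshold_transfer[OF ST sat_prob_bounds(2)])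
  fix c :: "nat \<Rightarrow> real" and s t :: real
  assume c: "\<And>n. 0 < c n" "c \<in> O(\<lambda>_. 1)"
  then obtain B where cB: "eventually (\<lambda>n. c n \<le> B) sequentially" by (auto elim: bigO_1_bounded)
  have k2: "k \<ge> 2" using k by simp
  have u: "(\<lambda>n. c n / real n ^ (k - 1)) \<longlonglongrightarrow> 0" "\<And>n. 0 \<le> c n / real n ^ (k - 1)"
    using threshold_scale_tendsto_0[OF k2 c(1) cB] c(1) by (auto simp: less_imp_le)
  {
    assume st: "s < t" "0 < t"
    have "filterlim (\<lambda>n. real n ^ (k - 2)) at_top sequentially"
      using k by (intro filterlim_pow_at_top filterlim_real_sequentially) auto
    hence "(\<lambda>n. s\<^sup>2 * B\<^sup>2 / real n ^ (k - 2)) \<longlonglongrightarrow> 0"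
      by (intro tendsto_divide_0[OF tendsto_const] filterlim_at_top_imp_at_infinity)
    hence "(\<lambda>n. exp (- 2 * (s\<^sup>2 * B\<^sup>2 / real n ^ (k - 2)))) \<longlonglongrightarrow> exp (- 2 * 0)"
      by (intro tendsto_intros)
    moreover have "\<forall>\<^sub>F n in sequentially. exp (- 2 * (s\<^sup>2 * B\<^sup>2 / real n ^ (k - 2)))
             * CSP_sat_prob d k P n (t * c n / real n ^ (k - 1))
             \<le> CSPhat_sat_prob d k P n (s * c n / real n ^ (k - 1))"
      using eventually_CSP_le_CSPhat[OF fin k2 c(1) cB st, where d = d] by simp
    ultimately show "\<exists>f. f \<longlonglongrightarrow> 1 \<and> (\<forall>\<^sub>F n in sequentially. f n * CSP_sat_prob d k P n (t * c n / real n ^ (k - 1))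
             \<le> CSPhat_sat_prob d k P n (s * c n / real n ^ (k - 1)))"
      by auto
  next
    assume "t < s" "0 < t"
    hence "\<forall>\<^sub>F n in sequentially. 1 * CSPhat_sat_prob d k P n (s * c n / real n ^ (k - 1))
             \<le> CSP_sat_prob d k P n (t * c n / real n ^ (k - 1))"
      using eventually_CSPhat_le_CSP[OF fin u, of s t] by simp
    thus "\<exists>\<delta>>0. \<forall>\<^sub>F n in sequentially. \<delta> * CSPhat_sat_prob d k P n (s * c n / real n ^ (k - 1))
             \<le> CSP_sat_prob d k P n (t * c n / real n ^ (k - 1))"
      by (intro exI[of _ 1]) simp
  }
qed

theorem lemma1:
  fixes d k :: nat and P :: "nat list set pmf"
  assumes "d \<ge> 2" and "k \<ge> 2"
    and "set_pmf P \<subseteq> constraints d k"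
  shows "(sharp_threshold k (CSPhat_sat_prob d k P) \<longrightarrow> sharp_threshold k (CSP_sat_prob d k P))
       \<and> (k \<ge> 3 \<longrightarrow> sharp_threshold k (CSP_sat_prob d k P) \<longrightarrow> sharp_threshold k (CSPhat_sat_prob d k P))"
proof -
  have fin: "finite (set_pmf P)" using assms(3) finite_constraints finite_subset by blast
  show ?thesis
    using CSPhat_threshold_imp_CSP_threshold[OF fin assms(2)] CSP_threshold_imp_CSPhat_threshold[OF fin]
    by blast
qed

end
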